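(* In the setting of the context, consider a Case 1 spacetime ($\partial_v r_-=0$, so $x_-(v)\equiv0$). Then the inner AH $x=0$ consists of radially outgoing null geodesics; radially outgoing null geodesics other than those on the inner AH never intersect the inner AH; and radially outgoing null geodesics inside the inner AH ($x<0$) satisfy $x(v)\to0$ as $v\to\infty$. Consequently, an event horizon exists.
   Context: Spherically symmetric spacetime $ds^2=-f(v,r)A(v,r)^2dv^2+2A(v,r)\,dr\,dv+r^2d\Omega^2$ with $A>0$, $f,A\to1$ as $r\to\infty$, $f(v,0)=1$, $\partial_rf(v,0)=\partial_rA(v,0)=0$; $f(v,\cdot)$ has exactly two zeros $r_+(v)>r_-(v)$ (outer/inner apparent horizons, AHs), $f=F(r-r_+)(r-r_-)$ with $F>0$, and $h=AF>0$. Assumptions: $\partial_v r_+<0$; $r_\pm(v)\to r_c$ as $v\to\infty$; the sign of $\partial_v r_-$ is constant; the $v\to\infty$ limits of $A,F,h$ behave as analytic functions of $r$, so all $\partial_r^n h$ converge as $v\to\infty$. With $x=r-r_c$, $x_\pm=r_\pm-r_c$ and $h$ regarded as a function of $(v,x)$, radially outgoing null geodesics solve $dx/dv=\tfrac12h(v,x)(x-x_+(v))(x-x_-(v))$. The event horizon is the boundary of the region from which outgoing null geodesics do not reach future null infinity ($x\to\infty$). *)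

theory Defs
  imports "HOL-Analysis.Analysis"
begin

text \<open>Right-hand side of the radially outgoing null geodesic equation
  dx/dv = 1/2 h(v,x) (x - x_+(v)) (x - x_-(v)), with x = r - r_c.\<close>
definition ngfield :: "(real \<Rightarrow> real \<Rightarrow> real) \<Rightarrow> (real \<Rightarrow> real) \<Rightarrow> (real \<Rightarrow> real)
    \<Rightarrow> real \<Rightarrow> real \<Rightarrow> real" where
  "ngfield h xp xm v x = 1/2 * h v x * (x - xp v) * (x - xm v)"

text \<open>A radially outgoing null geodesic, parametrised by v on a nonempty interval I,
  staying in the spacetime region r > 0, i.e. x > -r_c.\<close>
definition outgoing_null_geodesic :: "real \<Rightarrow> (real \<Rightarrow> real \<Rightarrow> real) \<Rightarrow> (real \<Rightarrow> real)
    \<Rightarrow> (real \<Rightarrow> real) \<Rightarrow> (real \<Rightarrow> real) \<Rightarrow> real set \<Rightarrow> bool" where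
  "outgoing_null_geodesic rc h xp xm \<gamma> I \<longleftrightarrow>
     is_interval I \<and> I \<noteq> {} \<and>
     (\<forall>v\<in>I. \<gamma> v > - rc \<and> (\<gamma> has_real_derivative ngfield h xp xm v (\<gamma> v)) (at v within I))"

definition reaches_scri :: "real \<Rightarrow> (real \<Rightarrow> real \<Rightarrow> real) \<Rightarrow> (real \<Rightarrow> real)
    \<Rightarrow> (real \<Rightarrow> real) \<Rightarrow> real \<Rightarrow> real \<Rightarrow> bool" where
  "reaches_scri rc h xp xm v0 x0 \<longleftrightarrow>
     (\<exists>\<gamma>. outgoing_null_geodesic rc h xp xm \<gamma> {v0..} \<and> \<gamma> v0 = x0 \<and> filterlim \<gamma> at_top at_top) \<or>
     (\<exists>b>v0. \<exists>\<gamma>. outgoing_null_geodesic rc h xp xm \<gamma> {v0..<b} \<and> \<gamma> v0 = x0 \<and>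
         filterlim \<gamma> at_top (at_left b))"

definition spacetime_domain :: "real \<Rightarrow> (real \<times> real) set" where
  "spacetime_domain rc = {p. snd p > - rc}"

definition trapped_region :: "real \<Rightarrow> (real \<Rightarrow> real \<Rightarrow> real) \<Rightarrow> (real \<Rightarrow> real)
    \<Rightarrow> (real \<Rightarrow> real) \<Rightarrow> (real \<times> real) set" where
  "trapped_region rc h xp xm = {(v, x). x > - rc \<and> \<not> reaches_scri rc h xp xm v x}"

definition event_horizon :: "real \<Rightarrow> (real \<Rightarrow> real \<Rightarrow> real) \<Rightarrow> (real \<Rightarrow> real)
    \<Rightarrow> (real \<Rightarrow> real) \<Rightarrow> (real \<times> real) set" where
  "event_horizon rc h xp xm = spacetime_domain rc \<inter> frontier (trapped_region rc h xp xm)"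

end

theory Submission
  imports Defs
begin

text \<open>
  The inner apparent horizon \<open>x = 0\<close> is a zero of the geodesic field, so \<open>x \<equiv> 0\<close> is a geodesic;
  the field is locally Lipschitz in \<open>x\<close>, so by uniqueness no other geodesic touches it.
  Below it both \<open>x\<close> and \<open>x - x\<^sub>+\<close> are negative, so a geodesic increases while staying below \<open>0\<close>.
  Were it to stay below \<open>-\<epsilon>\<close>, the eventual uniform positivity of \<open>h\<close> on compact sets would
  make it grow at a fixed positive rate, which is absurd; hence it tends to \<open>0\<close>.
  Starting above the outer horizon at \<open>x\<^sub>0 = x\<^sub>+(0) + 1\<close>, the field is again at least a positive multiple
  of \<open>h\<close>, so the maximal solution either blows up in finite time or, by the same rate argument,
  tends to infinity: it reaches future null infinity.  Thus \<open>(0, 0)\<close> is trapped and \<open>(0, x\<^sub>0)\<close> is not,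
  and since the spacetime is a connected half-plane, the boundary of the trapped region meets it.
\<close>

lemma is_interval_atLeastAtMost_subset:
  fixes I :: "real set"
  assumes "is_interval I" "p \<in> I" "q \<in> I"
  shows "{p..q} \<subseteq> I"
  using assms(1) unfolding is_interval_1 by (meson assms(2,3) atLeastAtMost_iff subsetI)

lemma DERIV_at_if_within_open_subset:
  assumes "(f has_real_derivative D) (at x within I)" "{p<..<q} \<subseteq> I" "x \<in> {p<..<q}"
  shows "(f has_real_derivative D) (at x)"
proof -
  have "at x within {p<..<q} = at x" using assms(3) by (intro at_within_open) auto
  with DERIV_subset[OF assms(1,2)] show ?thesis by metis
qed

lemma DERIV_within_Un:
  assumes "(f has_real_derivative D) (at x within S)" "(f has_real_derivative D) (at x within T)"
  shows "(f has_real_derivative D) (at x within S \<union> T)"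
proof -
  have "((\<lambda>y. (f y - f x) / (y - x)) \<longlongrightarrow> D) (at x within S \<union> T)"
    using assms unfolding at_within_union has_field_derivative_iff by (intro filterlim_sup)
  then show ?thesis unfolding has_field_derivative_iff .
qed

lemma DERIV_within_closed_outside:
  "x \<notin> S \<Longrightarrow> closed S \<Longrightarrow> (f has_real_derivative D) (at x within S)"
  using not_in_closure_trivial_limitI[of x S] by (simp add: closure_closed)

lemma DERIV_ge_imp_diff_ge:
  fixes f f' :: "real \<Rightarrow> real"
  assumes I: "is_interval I" and f: "\<forall>v\<in>I. (f has_real_derivative f' v) (at v within I)"
    and ge: "\<forall>v\<in>I. c \<le> f' v" and pq: "p \<in> I" "q \<in> I" "p \<le> q"
  shows "c * (q - p) \<le> f q - f p"
proof -
  have sub: "{p..q} \<subseteq> I" using is_interval_atLeastAtMost_subset[OF I pq(1,2)] .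
  have "(f has_derivative (\<lambda>d. f' x * d)) (at x within {p..q})" if "p \<le> x" "x \<le> q" for x
    using that sub f has_field_derivative_imp_has_derivative[OF DERIV_subset[OF _ sub]] by auto
  from mvt_very_simple[OF pq(3) this] obtain x where x: "x \<in> {p..q}" "f q - f p = f' x * (q - p)"
    by blast
  moreover have "c \<le> f' x" using ge sub x(1) by blast
  ultimately show ?thesis using pq(3) by (simp add: mult_right_mono)
qed

lemma DERIV_ge_pos_imp_unbounded:
  fixes f f' :: "real \<Rightarrow> real"
  assumes f: "\<forall>v\<in>{V..}. (f has_real_derivative f' v) (at v within {V..})"
    and ge: "\<forall>v\<in>{V..}. c \<le> f' v" and c: "0 < c"
  shows "\<exists>v\<ge>V. Z < f v"
proof -
  define v where "v = V + (\<bar>Z - f V\<bar> + 1) / c"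
  have "V \<le> v" using c by (simp add: v_def)
  then have "c * (v - V) \<le> f v - f V" by (intro DERIV_ge_imp_diff_ge[OF is_interval_ci f ge]) auto
  moreover have "c * (v - V) = \<bar>Z - f V\<bar> + 1" using c by (simp add: v_def)
  ultimately show ?thesis using \<open>V \<le> v\<close> by (intro exI[of _ v]) auto
qed

lemma DERIV_zero_tendsto_imp_const:
  fixes f :: "real \<Rightarrow> real"
  assumes "\<forall>v. (f has_real_derivative 0) (at v)" "(f \<longlongrightarrow> L) at_top"
  shows "f = (\<lambda>_. L)"
proof -
  have "f = (\<lambda>_. f 0)" using DERIV_isconst_all assms(1) by blast
  with assms(2) have "((\<lambda>_. f 0) \<longlongrightarrow> L) (at_top :: real filter)" by simp
  then have "f 0 = L" by (simp add: tendsto_const_iff[OF trivial_limit_at_top_linorder])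
  with \<open>f = (\<lambda>_. f 0)\<close> show ?thesis by simp
qed

lemma gronwall_vanishing:
  fixes u u' :: "real \<Rightarrow> real"
  assumes st: "s \<le> t" and cont: "continuous_on {s..t} u"
    and deriv: "\<forall>x\<in>{s<..<t}. (u has_real_derivative u' x) (at x)"
    and bound: "\<forall>x\<in>{s<..<t}. \<bar>u' x\<bar> \<le> K * u x"
    and nonneg: "\<forall>x\<in>{s..t}. 0 \<le> u x"
  shows "u s = 0 \<longleftrightarrow> u t = 0"
proof -
  have weighted: "((\<lambda>x. u x * exp (k * x)) has_real_derivative (u' x + k * u x) * exp (k * x)) (at x)"
    if "x \<in> {s<..<t}" for k x
    using deriv that by (auto intro!: derivative_eq_intros simp: algebra_simps)
  have "u t * exp (- K * t) \<le> u s * exp (- K * s)"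
  proof (rule DERIV_nonpos_imp_decreasing_open[OF st])
    fix x assume x: "s < x" "x < t"
    then have "\<bar>u' x\<bar> \<le> K * u x" using bound by auto
    then have "(u' x + - K * u x) * exp (- K * x) \<le> 0" by (simp add: abs_le_iff mult_nonpos_nonneg)
    with weighted[of x "- K"] x
    show "\<exists>y. ((\<lambda>x. u x * exp (- K * x)) has_real_derivative y) (at x) \<and> y \<le> 0" by auto
  qed (intro continuous_intros cont)
  moreover have "u s * exp (K * s) \<le> u t * exp (K * t)"
  proof (rule DERIV_nonneg_imp_increasing_open[OF st])
    fix x assume x: "s < x" "x < t"
    then have "\<bar>u' x\<bar> \<le> K * u x" using bound by auto
    then have "0 \<le> (u' x + K * u x) * exp (K * x)" by (simp add: abs_le_iff)
    with weighted[of x K] x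
    show "\<exists>y. ((\<lambda>x. u x * exp (K * x)) has_real_derivative y) (at x) \<and> 0 \<le> y" by auto
  qed (intro continuous_intros cont)
  moreover have "0 \<le> u s" "0 \<le> u t" using nonneg st by auto
  ultimately show ?thesis by (auto simp: mult_le_0_iff)
qed

lemma filterlim_at_top_if_mono_unbounded:
  fixes f :: "real \<Rightarrow> real"
  assumes mono: "\<And>s t. a \<le> s \<Longrightarrow> s \<le> t \<Longrightarrow> f s \<le> f t" and unbounded: "\<And>Z. \<exists>t\<ge>a. Z < f t"
  shows "filterlim f at_top at_top"
  unfolding filterlim_at_top
proof
  fix Z
  obtain t where t: "a \<le> t" "Z < f t" using unbounded by blast
  have "\<forall>\<^sub>F v in at_top. t \<le> v" by (rule eventually_ge_at_top)
  then show "\<forall>\<^sub>F v in at_top. Z \<le> f v"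
  proof eventually_elim
    fix v assume "t \<le> v"
    then show "Z \<le> f v" using mono[OF t(1)] t(2) by force
  qed
qed

lemma filterlim_at_top_at_left_if_mono_unbounded:
  fixes f :: "real \<Rightarrow> real"
  assumes mono: "\<And>s t. s \<in> {a..<b} \<Longrightarrow> s \<le> t \<Longrightarrow> t < b \<Longrightarrow> f s \<le> f t"
    and unbounded: "\<And>Z. \<exists>t\<in>{a..<b}. Z < f t"
  shows "filterlim f at_top (at_left b)"
  unfolding filterlim_at_top
proof
  fix Z
  obtain t where t: "t \<in> {a..<b}" "Z < f t" using unbounded by blast
  have "\<forall>\<^sub>F v in at_left b. v \<in> {t<..<b}" using t(1) by (intro eventually_at_left_real) simp
  then show "\<forall>\<^sub>F v in at_left b. Z \<le> f v"
  proof eventually_elim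
    fix v assume "v \<in> {t<..<b}"
    then show "Z \<le> f v" using mono[of t v] t by auto
  qed
qed

lemma tendsto_if_mono_approaching:
  fixes f :: "real \<Rightarrow> real"
  assumes mono: "\<And>s t. a \<le> s \<Longrightarrow> s \<le> t \<Longrightarrow> f s \<le> f t" and below: "\<And>t. a \<le> t \<Longrightarrow> f t < L"
    and approach: "\<And>e. 0 < e \<Longrightarrow> \<exists>t\<ge>a. L - e < f t"
  shows "(f \<longlongrightarrow> L) at_top"
proof (rule tendstoI)
  fix e :: real assume "0 < e"
  then obtain t where t: "a \<le> t" "L - e < f t" using approach by blast
  have "\<forall>\<^sub>F v in at_top. t \<le> v" by (rule eventually_ge_at_top)
  then show "\<forall>\<^sub>F v in at_top. dist (f v) L < e"
  proof eventually_elim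
    fix v assume "t \<le> v"
    then have "f t \<le> f v" "f v < L" using mono[OF t(1)] below[of v] t(1) by auto
    then show "dist (f v) L < e" using t(2) by (simp add: dist_real_def)
  qed
qed

lemma uniform_limit_eventually_ge:
  fixes f :: "'a \<Rightarrow> 'b::topological_space \<Rightarrow> real"
  assumes lim: "uniform_limit K f g F" and K: "compact K" "continuous_on K g" and pos: "\<forall>x\<in>K. 0 < g x"
  obtains m where "0 < m" "\<forall>\<^sub>F n in F. \<forall>x\<in>K. m \<le> f n x"
proof (cases "K = {}")
  case True
  then show ?thesis using that[of 1] by simp
next
  case False
  obtain x1 where x1: "x1 \<in> K" "\<forall>y\<in>K. g x1 \<le> g y" using continuous_attains_inf[OF K(1) False K(2)] by blast
  define m where "m = g x1 / 2"
  have m: "0 < m" using pos x1(1) by (simp add: m_def)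
  have "\<forall>\<^sub>F n in F. \<forall>x\<in>K. dist (f n x) (g x) < m" by (rule uniform_limitD[OF lim m])
  then have "\<forall>\<^sub>F n in F. \<forall>x\<in>K. m \<le> f n x"
  proof eventually_elim
    case (elim n)
    show ?case
    proof
      fix x assume "x \<in> K"
      then have "dist (f n x) (g x) < m" "2 * m \<le> g x" using elim x1(2) by (auto simp: m_def)
      then show "m \<le> f n x" by (simp add: dist_real_def abs_less_iff)
    qed
  qed
  with m show ?thesis using that by blast
qed

lemma continuous_on_compose_curried:
  assumes "continuous_on UNIV (\<lambda>p. G (fst p) (snd p))" "continuous_on S f"
  shows "continuous_on S (\<lambda>t. G t (f t))"
proof -
  have "continuous_on S (\<lambda>t. (t, f t))" using assms(2) by (intro continuous_intros)
  from continuous_on_compose2[OF assms(1) this] show ?thesis by simp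
qed

lemma clamped_indefinite_integral_bcontfun:
  fixes g :: "real \<Rightarrow> real"
  assumes g: "continuous_on {a..b} g" and ab: "a \<le> b"
  shows "(\<lambda>v. c + integral {a..max a (min b v)} g) \<in> bcontfun"
proof -
  define Q where "Q w = c + integral {a..w} g" for w
  define cl where "cl v = max a (min b v)" for v
  have Q: "continuous_on {a..b} Q" unfolding Q_def
    by (intro continuous_intros indefinite_integral_continuous_1 integrable_continuous_real g)
  have "range cl \<subseteq> {a..b}" using ab by (auto simp: cl_def)
  moreover have "continuous_on UNIV cl" unfolding cl_def by (intro continuous_intros)
  ultimately have "continuous_on UNIV (Q \<circ> cl)" using continuous_on_compose2[OF Q] by (simp add: o_def)
  moreover have "bounded (range (Q \<circ> cl))"
    by (rule bounded_subset[OF compact_imp_bounded[OF compact_continuous_image[OF Q compact_Icc]]])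
      (use \<open>range cl \<subseteq> {a..b}\<close> in auto)
  moreover have "Q \<circ> cl = (\<lambda>v. c + integral {a..max a (min b v)} g)" by (auto simp: Q_def cl_def)
  ultimately show ?thesis by (simp add: bcontfun_def)
qed

section \<open>Lipschitz continuity in the state variable\<close>

definition boxwise_lipschitz :: "real set \<Rightarrow> (real \<Rightarrow> real \<Rightarrow> real) \<Rightarrow> bool" where
  "boxwise_lipschitz X G \<longleftrightarrow>
     (\<forall>a b c d. {c..d} \<subseteq> X \<longrightarrow> (\<exists>K. \<forall>v\<in>{a..b}. K-lipschitz_on {c..d} (G v)))"

lemma boxwise_lipschitz_on_compact:
  assumes lip: "boxwise_lipschitz X G" and X: "is_interval X" and C: "compact C" "C \<subseteq> X"
  obtains K where "\<forall>v\<in>{a..b}. K-lipschitz_on C (G v)"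
proof (cases "C = {}")
  case True
  then show ?thesis using that[of 0] by simp
next
  case False
  obtain c d where cd: "c \<in> C" "d \<in> C" "C \<subseteq> {c..d}"
    using compact_attains_inf[OF C(1) False] compact_attains_sup[OF C(1) False]
    by (metis atLeastAtMost_iff subsetI)
  then have "{c..d} \<subseteq> X" using C(2) by (intro is_interval_atLeastAtMost_subset[OF X]) auto
  then obtain K where "\<forall>v\<in>{a..b}. K-lipschitz_on {c..d} (G v)"
    using lip unfolding boxwise_lipschitz_def by blast
  then show ?thesis using that cd(3) lipschitz_on_subset by blast
qed

lemma boxwise_lipschitz_if_continuous_deriv:
  fixes G G' :: "real \<Rightarrow> real \<Rightarrow> real"
  assumes deriv: "\<And>v x. x \<in> X \<Longrightarrow> (G v has_real_derivative G' v x) (at x)"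
    and cont: "continuous_on (UNIV \<times> X) (\<lambda>p. G' (fst p) (snd p))"
  shows "boxwise_lipschitz X G"
  unfolding boxwise_lipschitz_def
proof (intro allI impI)
  fix a b c d :: real assume cd: "{c..d} \<subseteq> X"
  have "{a..b} \<times> {c..d} \<subseteq> UNIV \<times> X" using cd by (intro Sigma_mono) auto
  then have "continuous_on ({a..b} \<times> {c..d}) (\<lambda>p. G' (fst p) (snd p))"
    by (rule continuous_on_subset[OF cont])
  then have "compact ((\<lambda>p. G' (fst p) (snd p)) ` ({a..b} \<times> {c..d}))"
    by (rule compact_continuous_image) (intro compact_Times compact_Icc)
  then have "bounded ((\<lambda>p. G' (fst p) (snd p)) ` ({a..b} \<times> {c..d}))" by (rule compact_imp_bounded)
  then obtain M where M: "0 < M" "\<forall>z\<in>(\<lambda>p. G' (fst p) (snd p)) ` ({a..b} \<times> {c..d}). norm z \<le> M"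
    by (metis bounded_pos)
  have "M-lipschitz_on {c..d} (G v)" if v: "v \<in> {a..b}" for v
  proof (rule lipschitz_onI)
    have deriv': "(G v has_field_derivative G' v z) (at z within {c..d})" if "z \<in> {c..d}" for z
      using that cd by (intro has_field_derivative_at_within[OF deriv]) auto
    have bound': "norm (G' v z) \<le> M" if "z \<in> {c..d}" for z
    proof -
      have "(v, z) \<in> {a..b} \<times> {c..d}" using v that by simp
      then show ?thesis using M(2) by force
    qed
    fix x y assume "x \<in> {c..d}" "y \<in> {c..d}"
    with field_differentiable_bound[where S = "{c..d}" and f = "G v" and f' = "G' v" and B = M, OF _ deriv' bound']
    show "dist (G v x) (G v y) \<le> M * dist x y" by (simp add: dist_norm)
  qed (use M in simp)
  then show "\<exists>K. \<forall>v\<in>{a..b}. K-lipschitz_on {c..d} (G v)" by blast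
qed

lemma boxwise_lipschitz_max_const:
  assumes lip: "boxwise_lipschitz X G" and X: "{x0..} \<subseteq> X"
  shows "boxwise_lipschitz UNIV (\<lambda>v x. G v (max x x0))"
  unfolding boxwise_lipschitz_def
proof (intro allI impI)
  fix a b c d :: real
  have "{max c x0..max d x0} \<subseteq> X" using X by auto
  then obtain K where K: "\<forall>v\<in>{a..b}. K-lipschitz_on {max c x0..max d x0} (G v)"
    using lip unfolding boxwise_lipschitz_def by blast
  have max_lip: "1-lipschitz_on {c..d} (\<lambda>x. max x x0)"
    by (rule lipschitz_onI) (auto simp: dist_real_def max_def)
  have "K-lipschitz_on {c..d} (\<lambda>x. G v (max x x0))" if "v \<in> {a..b}" for v
  proof -
    have "K-lipschitz_on ((\<lambda>x. max x x0) ` {c..d}) (G v)"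
      by (rule lipschitz_on_subset[OF K[rule_format, OF that]]) auto
    from lipschitz_on_compose2[OF max_lip this] show ?thesis by simp
  qed
  then show "\<exists>K. \<forall>v\<in>{a..b}. K-lipschitz_on {c..d} (\<lambda>x. G v (max x x0))" by blast
qed

section \<open>Scalar ordinary differential equations\<close>

definition ode_solution :: "(real \<Rightarrow> real \<Rightarrow> real) \<Rightarrow> (real \<Rightarrow> real) \<Rightarrow> real set \<Rightarrow> bool" where
  "ode_solution G \<gamma> I \<longleftrightarrow> (\<forall>v\<in>I. (\<gamma> has_real_derivative G v (\<gamma> v)) (at v within I))"

lemma ode_solution_subset: "ode_solution G \<gamma> I \<Longrightarrow> J \<subseteq> I \<Longrightarrow> ode_solution G \<gamma> J"
  unfolding ode_solution_def using DERIV_subset by blast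

lemma ode_solution_continuous_on: "ode_solution G \<gamma> I \<Longrightarrow> continuous_on I \<gamma>"
  unfolding ode_solution_def by (rule DERIV_continuous_on) blast

lemma ode_solution_mono:
  assumes "ode_solution G \<gamma> I" "is_interval I" "\<forall>v\<in>I. 0 \<le> G v (\<gamma> v)" "p \<in> I" "q \<in> I" "p \<le> q"
  shows "\<gamma> p \<le> \<gamma> q"
  using DERIV_ge_imp_diff_ge[of I \<gamma> "\<lambda>v. G v (\<gamma> v)" 0 p q] assms unfolding ode_solution_def by auto

lemma ode_solution_of_max_const:
  fixes F :: "real \<Rightarrow> real \<Rightarrow> real"
  assumes sol: "ode_solution (\<lambda>v x. F v (max x x0)) \<gamma> J"
    and J: "is_interval J" "v0 \<in> J" "J \<subseteq> {v0..}" and start: "\<gamma> v0 = x0"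
    and nonneg: "\<And>v x. v0 \<le> v \<Longrightarrow> 0 \<le> F v (max x x0)"
  shows "ode_solution F \<gamma> J" and "\<And>v. v \<in> J \<Longrightarrow> x0 \<le> \<gamma> v"
proof -
  show "x0 \<le> \<gamma> v" if "v \<in> J" for v
    using ode_solution_mono[OF sol J(1) _ J(2) that] nonneg J(3) that start by auto
  then show "ode_solution F \<gamma> J" using sol by (simp add: ode_solution_def max_absorb1)
qed

lemma ode_solution_not_confined:
  fixes F :: "real \<Rightarrow> real \<Rightarrow> real"
  assumes sol: "ode_solution F \<gamma> {v0..}" and confined: "\<And>v. v0 \<le> v \<Longrightarrow> \<gamma> v \<in> {c..d}"
    and lower: "\<forall>\<^sub>F v in at_top. \<forall>x\<in>{c..d}. m \<le> F v x" and m: "0 < m"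
  shows False
proof -
  obtain V where V: "\<And>v x. V \<le> v \<Longrightarrow> x \<in> {c..d} \<Longrightarrow> m \<le> F v x"
    using lower unfolding eventually_at_top_linorder by blast
  define V' where "V' = max V v0"
  have "\<forall>v\<in>{V'..}. (\<gamma> has_real_derivative F v (\<gamma> v)) (at v within {V'..})"
    using ode_solution_subset[OF sol, of "{V'..}"] by (auto simp: ode_solution_def V'_def)
  moreover have "\<forall>v\<in>{V'..}. m \<le> F v (\<gamma> v)" using V confined by (auto simp: V'_def)
  ultimately have "\<exists>v\<ge>V'. d < \<gamma> v" by (rule DERIV_ge_pos_imp_unbounded[OF _ _ m])
  then obtain v where "V' \<le> v" "d < \<gamma> v" by blast
  with confined[of v] show False by (auto simp: V'_def)
qed

lemma ode_solution_unique:
  fixes G :: "real \<Rightarrow> real \<Rightarrow> real"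
  assumes lip: "boxwise_lipschitz X G" and X: "is_interval X" and I: "is_interval I"
    and sol1: "ode_solution G \<gamma>1 I" and sol2: "ode_solution G \<gamma>2 I"
    and range: "\<gamma>1 ` I \<subseteq> X" "\<gamma>2 ` I \<subseteq> X"
    and pq: "p \<in> I" "q \<in> I" and eq: "\<gamma>1 p = \<gamma>2 p"
  shows "\<gamma>1 q = \<gamma>2 q"
proof -
  define s t where "s = min p q" and "t = max p q"
  have st: "s \<le> t" "{s..t} \<subseteq> I" "p \<in> {s, t}" "q \<in> {s, t}"
    using is_interval_atLeastAtMost_subset[OF I] pq by (auto simp: s_def t_def min_def max_def)
  define C where "C = \<gamma>1 ` {s..t} \<union> \<gamma>2 ` {s..t}"
  have "compact C" unfolding C_def
    by (intro compact_Un compact_continuous_image compact_Icc continuous_on_subset[OF _ st(2)]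
        ode_solution_continuous_on[OF sol1] ode_solution_continuous_on[OF sol2])
  moreover have "C \<subseteq> X" using range st(2) unfolding C_def by (metis image_mono order_trans Un_least)
  ultimately obtain K where K: "\<forall>v\<in>{s..t}. K-lipschitz_on C (G v)"
    by (rule boxwise_lipschitz_on_compact[OF lip X])
  define u where "u v = (\<gamma>1 v - \<gamma>2 v)\<^sup>2" for v
  define u' where "u' v = 2 * (\<gamma>1 v - \<gamma>2 v) * (G v (\<gamma>1 v) - G v (\<gamma>2 v))" for v
  have "u s = 0 \<longleftrightarrow> u t = 0"
  proof (rule gronwall_vanishing[OF st(1), where u' = u' and K = "2 * K"])
    show "continuous_on {s..t} u" unfolding u_def
      by (intro continuous_intros continuous_on_subset[OF _ st(2)]
        ode_solution_continuous_on[OF sol1] ode_solution_continuous_on[OF sol2])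
    show "\<forall>x\<in>{s<..<t}. (u has_real_derivative u' x) (at x)"
    proof
      fix x assume x: "x \<in> {s<..<t}"
      have "{s<..<t} \<subseteq> I" using st(2) by auto
      then have "(\<gamma>1 has_real_derivative G x (\<gamma>1 x)) (at x)" "(\<gamma>2 has_real_derivative G x (\<gamma>2 x)) (at x)"
        using sol1 sol2 x by (auto intro!: DERIV_at_if_within_open_subset simp: ode_solution_def)
      then show "(u has_real_derivative u' x) (at x)"
        unfolding u_def u'_def by (auto intro!: derivative_eq_intros)
    qed
    show "\<forall>x\<in>{s<..<t}. \<bar>u' x\<bar> \<le> 2 * K * u x"
    proof
      fix x assume "x \<in> {s<..<t}"
      then have x: "x \<in> {s..t}" by auto
      then have "\<gamma>1 x \<in> C" "\<gamma>2 x \<in> C" unfolding C_def by blast+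
      then have "\<bar>G x (\<gamma>1 x) - G x (\<gamma>2 x)\<bar> \<le> K * \<bar>\<gamma>1 x - \<gamma>2 x\<bar>"
        using lipschitz_onD[OF K[rule_format, OF x]] by (simp add: dist_real_def)
      then have "\<bar>u' x\<bar> \<le> 2 * \<bar>\<gamma>1 x - \<gamma>2 x\<bar> * (K * \<bar>\<gamma>1 x - \<gamma>2 x\<bar>)"
        unfolding u'_def abs_mult by (simp add: mult_left_mono)
      then show "\<bar>u' x\<bar> \<le> 2 * K * u x" by (simp add: u_def power2_eq_square abs_mult_self_eq algebra_simps)
    qed
  qed (auto simp: u_def)
  then show ?thesis using st(3,4) eq by (auto simp: u_def)
qed

text \<open>Clamping the upper limit of integration to \<open>[a, a + \<delta>]\<close> lets the Picard map act on
  bounded continuous functions on the whole line, where it is a contraction with constant \<open>\<delta> K\<close>.\<close>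

lemma picard_fixed_point:
  fixes G :: "real \<Rightarrow> real \<Rightarrow> real"
  assumes cont: "continuous_on UNIV (\<lambda>p. G (fst p) (snd p))"
    and lip: "\<forall>t\<in>{a..a+\<delta>}. K-lipschitz_on UNIV (G t)"
    and \<delta>: "0 < \<delta>" "\<delta> * K < 1"
  obtains \<phi> where "continuous_on UNIV \<phi>" "\<And>v. v \<in> {a..a+\<delta>} \<Longrightarrow> \<phi> v = y + integral {a..v} (\<lambda>t. G t (\<phi> t))"
proof -
  have K: "0 \<le> K" using lip \<delta>(1) lipschitz_on_nonneg by force
  define cl where "cl v = max a (min (a + \<delta>) v)" for v
  have cl: "cl v \<in> {a..a+\<delta>}" for v using \<delta>(1) by (auto simp: cl_def)
  define P where "P f v = y + integral {a..cl v} (\<lambda>t. G t (f t))" for f :: "real \<Rightarrow> real" and v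
  have P: "P (apply_bcontfun \<phi>) \<in> bcontfun" for \<phi>
  proof -
    have "continuous_on {a..a+\<delta>} (\<lambda>t. G t (\<phi> t))"
      by (rule continuous_on_compose_curried[OF cont continuous_on_apply_bcontfun])
    then show ?thesis unfolding P_def cl_def
      by (rule clamped_indefinite_integral_bcontfun) (use \<delta>(1) in simp)
  qed
  define picard where "picard \<phi> = Bcontfun (P (apply_bcontfun \<phi>))" for \<phi> :: "real \<Rightarrow>\<^sub>C real"
  have picard: "apply_bcontfun (picard \<phi>) = P (apply_bcontfun \<phi>)" for \<phi>
    unfolding picard_def using P by (simp add: Bcontfun_inverse)
  have "dist (picard \<phi>) (picard \<psi>) \<le> (\<delta> * K) * dist \<phi> \<psi>" for \<phi> \<psi>
  proof (rule dist_bound)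
    fix v
    let ?d = "\<lambda>t. G t (\<phi> t) - G t (\<psi> t)"
    have cont_along: "continuous_on {a..cl v} (\<lambda>t. G t (\<phi> t))" "continuous_on {a..cl v} (\<lambda>t. G t (\<psi> t))"
      by (rule continuous_on_compose_curried[OF cont continuous_on_apply_bcontfun])+
    have "dist (picard \<phi> v) (picard \<psi> v) = norm (integral {a..cl v} ?d)"
      using cont_along by (simp add: picard P_def dist_real_def integral_diff integrable_continuous_real)
    also have "\<dots> \<le> (K * dist \<phi> \<psi>) * (cl v - a)"
    proof (rule integral_bound)
      fix t assume "t \<in> {a..cl v}"
      then have "t \<in> {a..a+\<delta>}" using cl[of v] by auto
      then have "norm (?d t) \<le> K * dist (\<phi> t) (\<psi> t)"
        using lip lipschitz_onD by (fastforce simp: dist_real_def)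
      also have "\<dots> \<le> K * dist \<phi> \<psi>" by (intro mult_left_mono dist_bounded K)
      finally show "norm (?d t) \<le> K * dist \<phi> \<psi>" .
    qed (use cl[of v] cont_along in \<open>auto intro!: continuous_intros\<close>)
    also have "\<dots> \<le> (K * dist \<phi> \<psi>) * \<delta>" using cl[of v] K by (intro mult_left_mono) auto
    finally show "dist (picard \<phi> v) (picard \<psi> v) \<le> (\<delta> * K) * dist \<phi> \<psi>" by (simp add: algebra_simps)
  qed
  then obtain \<phi> where "picard \<phi> = \<phi>" using banach_fix_type[of "\<delta> * K" picard] \<delta> K by auto
  then have "\<phi> v = y + integral {a..v} (\<lambda>t. G t (\<phi> t))" if "v \<in> {a..a+\<delta>}" for v
    using that fun_cong[OF picard[of \<phi>], of v] by (simp add: P_def cl_def)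
  then show ?thesis using that continuous_on_apply_bcontfun by blast
qed

lemma picard_lindeloef_short_time:
  fixes G :: "real \<Rightarrow> real \<Rightarrow> real"
  assumes cont: "continuous_on UNIV (\<lambda>p. G (fst p) (snd p))"
    and lip: "\<forall>t\<in>{a..a+\<delta>}. K-lipschitz_on UNIV (G t)"
    and \<delta>: "0 < \<delta>" "\<delta> * K < 1"
  obtains \<phi> where "\<phi> a = y" "ode_solution G \<phi> {a..a+\<delta>}"
proof -
  obtain \<phi> where \<phi>: "continuous_on UNIV \<phi>"
    and fixed_point: "\<And>v. v \<in> {a..a+\<delta>} \<Longrightarrow> \<phi> v = y + integral {a..v} (\<lambda>t. G t (\<phi> t))"
    using picard_fixed_point[where y = y, OF cont lip \<delta>] by blast
  have "ode_solution G \<phi> {a..a+\<delta>}" unfolding ode_solution_def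
  proof
    fix v assume v: "v \<in> {a..a+\<delta>}"
    have "continuous_on {a..a+\<delta>} (\<lambda>t. G t (\<phi> t))"
      by (rule continuous_on_compose_curried[OF cont continuous_on_subset[OF \<phi>]]) simp
    from DERIV_add[OF DERIV_const integral_has_real_derivative[OF this v]]
    have "((\<lambda>w. y + integral {a..w} (\<lambda>t. G t (\<phi> t))) has_real_derivative G v (\<phi> v)) (at v within {a..a+\<delta>})"
      by simp
    then show "(\<phi> has_real_derivative G v (\<phi> v)) (at v within {a..a+\<delta>})"
      by (rule has_field_derivative_transform_within[OF _ zero_less_one v]) (simp add: fixed_point)
  qed
  moreover have "\<phi> a = y" using fixed_point[of a] \<delta>(1) by simp
  ultimately show ?thesis using that by blast
qed

text \<open>Clamping the state to \<open>[y - 1, y + 1]\<close> makes the field globally Lipschitz; as \<open>\<delta> M \<le> 1\<close>,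
  the solution of the clamped equation never reaches the clamp.\<close>

lemma ode_local_existence:
  fixes G :: "real \<Rightarrow> real \<Rightarrow> real"
  assumes cont: "continuous_on UNIV (\<lambda>p. G (fst p) (snd p))"
    and bound: "\<And>t z. t \<in> {a..a+\<delta>} \<Longrightarrow> z \<in> {y-1..y+1} \<Longrightarrow> \<bar>G t z\<bar> \<le> M"
    and lip: "\<forall>t\<in>{a..a+\<delta>}. K-lipschitz_on {y-1..y+1} (G t)"
    and \<delta>: "0 < \<delta>" "\<delta> * M \<le> 1" "\<delta> * K < 1"
  obtains \<phi> where "\<phi> a = y" "ode_solution G \<phi> {a..a+\<delta>}"
proof -
  define cy where "cy z = max (y - 1) (min (y + 1) z)" for z
  have cy: "cy z \<in> {y-1..y+1}" "z \<in> {y-1..y+1} \<Longrightarrow> cy z = z" for z by (auto simp: cy_def)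
  have cy_lip: "1-lipschitz_on UNIV cy" by (rule lipschitz_onI) (auto simp: cy_def dist_real_def)
  have "\<forall>t\<in>{a..a+\<delta>}. K-lipschitz_on UNIV (\<lambda>z. G t (cy z))"
  proof
    fix t assume "t \<in> {a..a+\<delta>}"
    then have "K-lipschitz_on (range cy) (G t)" using lip cy(1) by (blast intro: lipschitz_on_subset)
    from lipschitz_on_compose2[OF cy_lip this] show "K-lipschitz_on UNIV (\<lambda>z. G t (cy z))" by simp
  qed
  moreover have "continuous_on UNIV (\<lambda>p. (fst p, cy (snd p)))"
    unfolding cy_def by (intro continuous_intros)
  then have "continuous_on UNIV (\<lambda>p. G (fst p) (cy (snd p)))"
    using continuous_on_compose2[OF cont] by fastforce
  ultimately obtain \<phi> where \<phi>: "\<phi> a = y" "ode_solution (\<lambda>t z. G t (cy z)) \<phi> {a..a+\<delta>}"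
    using picard_lindeloef_short_time[of "\<lambda>t z. G t (cy z)" a \<delta> K] \<delta>(1,3) by auto
  have "\<phi> v \<in> {y-1..y+1}" if v: "v \<in> {a..a+\<delta>}" for v
  proof -
    have "norm (\<phi> v - \<phi> a) \<le> M * norm (v - a)"
      using \<phi>(2) bound cy(1) v \<delta>(1)
      by (intro field_differentiable_bound[of "{a..a+\<delta>}"]) (auto simp: ode_solution_def)
    also have "\<dots> \<le> M * \<delta>" using v bound[of a y] \<delta>(1) by (intro mult_left_mono) auto
    finally show ?thesis using \<phi>(1) \<delta>(2) by (auto simp: abs_le_iff algebra_simps)
  qed
  then have "ode_solution G \<phi> {a..a+\<delta>}" using \<phi>(2) cy(2) by (simp add: ode_solution_def)
  with \<phi>(1) show ?thesis using that by blast
qed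

lemma ode_local_existence_uniform:
  fixes G :: "real \<Rightarrow> real \<Rightarrow> real"
  assumes cont: "continuous_on UNIV (\<lambda>p. G (fst p) (snd p))" and lip: "boxwise_lipschitz UNIV G"
  obtains \<delta> where "0 < \<delta>"
    "\<And>a y. a \<in> {A..B} \<Longrightarrow> y \<in> {-Y..Y} \<Longrightarrow> \<exists>\<phi>. \<phi> a = y \<and> ode_solution G \<phi> {a..a+\<delta>}"
proof -
  have "compact ((\<lambda>p. G (fst p) (snd p)) ` ({A..B+1} \<times> {-Y-1..Y+1}))"
    by (intro compact_continuous_image continuous_on_subset[OF cont] compact_Times compact_Icc) auto
  then obtain M where M: "0 < M" "\<forall>p\<in>{A..B+1} \<times> {-Y-1..Y+1}. \<bar>G (fst p) (snd p)\<bar> \<le> M"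
    by (auto dest!: compact_imp_bounded simp: bounded_pos)
  obtain K where K: "\<forall>t\<in>{A..B+1}. K-lipschitz_on {-Y-1..Y+1} (G t)"
    using lip unfolding boxwise_lipschitz_def by blast
  define \<delta> where "\<delta> = min 1 (min (1/M) (1/(\<bar>K\<bar>+1)))"
  have \<delta>: "0 < \<delta>" "\<delta> \<le> 1" "\<delta> * M \<le> 1" "\<delta> * K < 1"
  proof -
    show "0 < \<delta>" "\<delta> \<le> 1" using M(1) by (auto simp: \<delta>_def)
    have "\<delta> * M \<le> 1/M * M" using M(1) by (intro mult_right_mono) (auto simp: \<delta>_def)
    then show "\<delta> * M \<le> 1" using M(1) by simp
    have "\<delta> * K \<le> \<delta> * \<bar>K\<bar>" using \<open>0 < \<delta>\<close> by (simp add: mult_left_mono)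
    also have "\<dots> \<le> 1/(\<bar>K\<bar>+1) * \<bar>K\<bar>" by (intro mult_right_mono) (auto simp: \<delta>_def)
    also have "\<dots> < 1" by (simp add: field_simps)
    finally show "\<delta> * K < 1" .
  qed
  show ?thesis
  proof (rule that[OF \<delta>(1)])
    fix a y assume a: "a \<in> {A..B}" and y: "y \<in> {-Y..Y}"
    have t: "t \<in> {A..B+1}" if "t \<in> {a..a+\<delta>}" for t using that a \<delta>(2) by auto
    have z: "{y-1..y+1} \<subseteq> {-Y-1..Y+1}" using y by auto
    have bound: "\<bar>G t z\<bar> \<le> M" if "t \<in> {a..a+\<delta>}" "z \<in> {y-1..y+1}" for t z
    proof -
      have "(t, z) \<in> {A..B+1} \<times> {-Y-1..Y+1}" using t[OF that(1)] z that(2) by blast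
      from bspec[OF M(2) this] show ?thesis by simp
    qed
    have lip_box: "\<forall>t\<in>{a..a+\<delta>}. K-lipschitz_on {y-1..y+1} (G t)"
      using lipschitz_on_subset[OF K[rule_format, OF t] z] by blast
    obtain \<phi> where "\<phi> a = y" "ode_solution G \<phi> {a..a+\<delta>}"
      by (rule ode_local_existence[OF cont bound lip_box \<delta>(1,3,4)])
    then show "\<exists>\<phi>. \<phi> a = y \<and> ode_solution G \<phi> {a..a+\<delta>}" by blast
  qed
qed

lemma ode_solution_glue:
  assumes \<gamma>: "ode_solution G \<gamma> {a..t}" and \<phi>: "ode_solution G \<phi> {t..b}" and eq: "\<phi> t = \<gamma> t"
    and "a \<le> t" "t \<le> b"
  shows "ode_solution G (\<lambda>v. if v \<le> t then \<gamma> v else \<phi> v) {a..b}"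
  unfolding ode_solution_def
proof
  fix v assume v: "v \<in> {a..b}"
  define \<psi> where "\<psi> v = (if v \<le> t then \<gamma> v else \<phi> v)" for v
  have "(\<psi> has_real_derivative G v (\<psi> v)) (at v within {a..t})"
  proof (cases "v \<le> t")
    case True
    then have "v \<in> {a..t}" using v by simp
    with \<gamma> have "(\<gamma> has_real_derivative G v (\<gamma> v)) (at v within {a..t})" by (simp add: ode_solution_def)
    then have "(\<psi> has_real_derivative G v (\<gamma> v)) (at v within {a..t})"
      using \<open>v \<in> {a..t}\<close> by (rule has_field_derivative_transform_within[OF _ zero_less_one]) (auto simp: \<psi>_def)
    then show ?thesis using True by (simp add: \<psi>_def)
  qed (simp add: DERIV_within_closed_outside)
  moreover have "(\<psi> has_real_derivative G v (\<psi> v)) (at v within {t..b})"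
  proof (cases "t \<le> v")
    case True
    then have "v \<in> {t..b}" using v by simp
    with \<phi> have "(\<phi> has_real_derivative G v (\<phi> v)) (at v within {t..b})" by (simp add: ode_solution_def)
    then have "(\<psi> has_real_derivative G v (\<phi> v)) (at v within {t..b})"
      using \<open>v \<in> {t..b}\<close> by (rule has_field_derivative_transform_within[OF _ zero_less_one]) (auto simp: \<psi>_def eq)
    then show ?thesis using True eq by (cases "v = t") (auto simp: \<psi>_def)
  qed (simp add: DERIV_within_closed_outside)
  moreover have "{a..t} \<union> {t..b} = {a..b}" using assms by auto
  ultimately show "(\<psi> has_real_derivative G v (\<psi> v)) (at v within {a..b})"
    using DERIV_within_Un by metis
qed

lemma ode_solution_extend_uniform:
  fixes G :: "real \<Rightarrow> real \<Rightarrow> real"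
  assumes cont: "continuous_on UNIV (\<lambda>p. G (fst p) (snd p))" and lip: "boxwise_lipschitz UNIV G"
  obtains \<delta> where "0 < \<delta>"
    "\<And>\<gamma> t. ode_solution G \<gamma> {v0..t} \<Longrightarrow> t \<in> {v0..B} \<Longrightarrow> \<bar>\<gamma> t\<bar> \<le> Y \<Longrightarrow>
      \<exists>\<psi>. ode_solution G \<psi> {v0..t+\<delta>} \<and> (\<forall>v\<in>{v0..t}. \<psi> v = \<gamma> v)"
proof -
  obtain \<delta> where \<delta>: "0 < \<delta>"
    "\<And>a y. a \<in> {v0..B} \<Longrightarrow> y \<in> {-Y..Y} \<Longrightarrow> \<exists>\<phi>. \<phi> a = y \<and> ode_solution G \<phi> {a..a+\<delta>}"
    using ode_local_existence_uniform[OF cont lip] by metis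
  show ?thesis
  proof (rule that[OF \<delta>(1)])
    fix \<gamma> t assume \<gamma>: "ode_solution G \<gamma> {v0..t}" and t: "t \<in> {v0..B}" and bound: "\<bar>\<gamma> t\<bar> \<le> Y"
    have "\<gamma> t \<in> {-Y..Y}" using bound by (simp add: abs_le_iff)
    then obtain \<phi> where \<phi>: "\<phi> t = \<gamma> t" "ode_solution G \<phi> {t..t+\<delta>}" using \<delta>(2)[OF t] by blast
    have "ode_solution G (\<lambda>v. if v \<le> t then \<gamma> v else \<phi> v) {v0..t+\<delta>}"
      using ode_solution_glue[OF \<gamma> \<phi>(2,1)] t \<delta>(1) by simp
    then show "\<exists>\<psi>. ode_solution G \<psi> {v0..t+\<delta>} \<and> (\<forall>v\<in>{v0..t}. \<psi> v = \<gamma> v)" by force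
  qed
qed

lemma ode_solution_patch:
  assumes J: "J \<subseteq> {v0..}"
    and pieces: "\<And>v. v \<in> J \<Longrightarrow> \<exists>b \<gamma>. v < b \<and> J \<inter> {..<b} = {v0..<b} \<and>
      ode_solution G \<gamma> {v0..b} \<and> (\<forall>u\<in>{v0..<b}. \<gamma> u = \<Gamma> u)"
  shows "ode_solution G \<Gamma> J"
  unfolding ode_solution_def
proof
  fix v assume v: "v \<in> J"
  obtain b \<gamma> where b: "v < b" "J \<inter> {..<b} = {v0..<b}" "ode_solution G \<gamma> {v0..b}"
    and agree: "\<forall>u\<in>{v0..<b}. \<gamma> u = \<Gamma> u" using pieces[OF v] by blast
  have vb: "v \<in> {v0..<b}" using v J b(1) by auto
  have at_eq: "at v within {v0..b} = at v within J"
  proof (rule at_within_nhd)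
    show "v \<in> {..<b}" "open {..<b}" using b(1) by auto
    show "{v0..b} \<inter> {..<b} - {v} = J \<inter> {..<b} - {v}" unfolding b(2) by auto
  qed
  have "(\<gamma> has_real_derivative G v (\<gamma> v)) (at v within {v0..b})"
    using b(3) vb by (simp add: ode_solution_def)
  then have "(\<gamma> has_real_derivative G v (\<gamma> v)) (at v within J)" unfolding at_eq .
  then have "(\<Gamma> has_real_derivative G v (\<gamma> v)) (at v within J)"
  proof (rule has_field_derivative_transform_within)
    show "0 < b - v" "v \<in> J" using v b(1) by auto
    fix u assume "u \<in> J" "dist u v < b - v"
    then have "u \<in> J \<inter> {..<b}" by (auto simp: dist_real_def)
    then show "\<gamma> u = \<Gamma> u" using agree unfolding b(2) by blast
  qed
  then show "(\<Gamma> has_real_derivative G v (\<Gamma> v)) (at v within J)" using agree vb by metis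
qed

definition ode_existence_times :: "(real \<Rightarrow> real \<Rightarrow> real) \<Rightarrow> real \<Rightarrow> real \<Rightarrow> real set" where
  "ode_existence_times G v0 x0 = {b. v0 < b \<and> (\<exists>\<gamma>. \<gamma> v0 = x0 \<and> ode_solution G \<gamma> {v0..b})}"

lemma ode_existence_times_nonempty:
  fixes G :: "real \<Rightarrow> real \<Rightarrow> real"
  assumes cont: "continuous_on UNIV (\<lambda>p. G (fst p) (snd p))" and lip: "boxwise_lipschitz UNIV G"
  shows "ode_existence_times G v0 x0 \<noteq> {}"
proof -
  obtain \<delta> where \<delta>: "0 < \<delta>"
    "\<And>a y. a \<in> {v0..v0} \<Longrightarrow> y \<in> {-\<bar>x0\<bar>..\<bar>x0\<bar>} \<Longrightarrow> \<exists>\<phi>. \<phi> a = y \<and> ode_solution G \<phi> {a..a+\<delta>}"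
    using ode_local_existence_uniform[OF cont lip, of v0 v0 "\<bar>x0\<bar>"] by blast
  have "x0 \<in> {-\<bar>x0\<bar>..\<bar>x0\<bar>}" by (cases "0 \<le> x0") auto
  then have "v0 + \<delta> \<in> ode_existence_times G v0 x0" using \<delta> unfolding ode_existence_times_def by auto
  then show ?thesis by blast
qed

lemma ode_solution_union:
  fixes G :: "real \<Rightarrow> real \<Rightarrow> real"
  assumes lip: "boxwise_lipschitz UNIV G"
  obtains \<Gamma> where "\<And>\<gamma> b v. \<gamma> v0 = x0 \<Longrightarrow> ode_solution G \<gamma> {v0..b} \<Longrightarrow> v0 \<le> v \<Longrightarrow> v < b \<Longrightarrow> \<Gamma> v = \<gamma> v"
    "\<And>J. J \<subseteq> {v0..} \<Longrightarrow> (\<And>v. v \<in> J \<Longrightarrow> \<exists>b\<in>ode_existence_times G v0 x0. v < b \<and> J \<inter> {..<b} = {v0..<b}) \<Longrightarrow>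
      ode_solution G \<Gamma> J"
proof -
  have agree: "\<gamma>1 v = \<gamma>2 v"
    if "ode_solution G \<gamma>1 {v0..b1}" "ode_solution G \<gamma>2 {v0..b2}" "\<gamma>1 v0 = x0" "\<gamma>2 v0 = x0"
      "v0 \<le> v" "v \<le> b1" "v \<le> b2" for \<gamma>1 \<gamma>2 b1 b2 v
  proof -
    have "ode_solution G \<gamma>1 {v0..min b1 b2}" "ode_solution G \<gamma>2 {v0..min b1 b2}"
      using that(1,2) by (auto elim!: ode_solution_subset)
    then show ?thesis
      by (rule ode_solution_unique[OF lip is_interval_univ is_interval_cc, where p = v0]) (use that(3-7) in auto)
  qed
  define sel where "sel v = (SOME \<gamma>. \<exists>b>v. \<gamma> v0 = x0 \<and> ode_solution G \<gamma> {v0..b})" for v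
  define \<Gamma> where "\<Gamma> v = sel v v" for v
  have \<Gamma>: "\<Gamma> v = \<gamma> v" if "\<gamma> v0 = x0" "ode_solution G \<gamma> {v0..b}" "v0 \<le> v" "v < b" for \<gamma> b v
  proof -
    have "\<exists>\<gamma>. \<exists>b>v. \<gamma> v0 = x0 \<and> ode_solution G \<gamma> {v0..b}" using that by blast
    from someI_ex[OF this] obtain b' where b': "v < b'" "sel v v0 = x0" "ode_solution G (sel v) {v0..b'}"
      unfolding sel_def by blast
    have "sel v v = \<gamma> v" using agree[of "sel v" b' \<gamma> b v] b' that by auto
    then show ?thesis by (simp add: \<Gamma>_def)
  qed
  have "ode_solution G \<Gamma> J"
    if J: "J \<subseteq> {v0..}"
      and covered: "\<And>v. v \<in> J \<Longrightarrow> \<exists>b\<in>ode_existence_times G v0 x0. v < b \<and> J \<inter> {..<b} = {v0..<b}" for J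
  proof (rule ode_solution_patch[OF J])
    fix v assume "v \<in> J"
    then obtain b where b: "b \<in> ode_existence_times G v0 x0" "v < b" "J \<inter> {..<b} = {v0..<b}"
      using covered by blast
    then obtain \<gamma> where \<gamma>: "\<gamma> v0 = x0" "ode_solution G \<gamma> {v0..b}" unfolding ode_existence_times_def by blast
    have "\<forall>u\<in>{v0..<b}. \<gamma> u = \<Gamma> u" using \<Gamma>[OF \<gamma>] by simp
    then show "\<exists>b \<gamma>. v < b \<and> J \<inter> {..<b} = {v0..<b} \<and> ode_solution G \<gamma> {v0..b} \<and> (\<forall>u\<in>{v0..<b}. \<gamma> u = \<Gamma> u)"
      using b \<gamma> by blast
  qed
  with \<Gamma> show ?thesis using that by blast
qed

text \<open>The continuation argument: a solution that stayed bounded near the supremum of the existence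
  times could be extended beyond it by one uniform local existence step.\<close>

lemma ode_existence_times_bounded_imp_unbounded:
  fixes G :: "real \<Rightarrow> real \<Rightarrow> real"
  assumes cont: "continuous_on UNIV (\<lambda>p. G (fst p) (snd p))" and lip: "boxwise_lipschitz UNIV G"
    and bdd: "bdd_above (ode_existence_times G v0 x0)"
  obtains b \<gamma> t where "b \<in> ode_existence_times G v0 x0" "\<gamma> v0 = x0" "ode_solution G \<gamma> {v0..b}"
    "t \<in> {v0..<b}" "Y < \<bar>\<gamma> t\<bar>"
proof -
  let ?S = "ode_existence_times G v0 x0"
  define B where "B = Sup ?S"
  have S: "?S \<noteq> {}" using ode_existence_times_nonempty[OF cont lip] .
  have upper: "b \<le> B" if "b \<in> ?S" for b using cSup_upper[OF that bdd] by (simp add: B_def)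
  obtain \<delta> where \<delta>: "0 < \<delta>" "\<And>\<gamma> t. ode_solution G \<gamma> {v0..t} \<Longrightarrow> t \<in> {v0..B} \<Longrightarrow>
      \<bar>\<gamma> t\<bar> \<le> Y \<Longrightarrow> \<exists>\<psi>. ode_solution G \<psi> {v0..t+\<delta>} \<and> (\<forall>v\<in>{v0..t}. \<psi> v = \<gamma> v)"
    using ode_solution_extend_uniform[OF cont lip] by metis
  obtain b where b: "b \<in> ?S" "B - \<delta>/2 < b"
    using less_cSup_iff[OF S bdd, of "B - \<delta>/2"] \<delta>(1) unfolding B_def by auto
  then obtain \<gamma> where \<gamma>: "v0 < b" "\<gamma> v0 = x0" "ode_solution G \<gamma> {v0..b}"
    unfolding ode_existence_times_def by blast
  define t where "t = max v0 (b - \<delta>/2)"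
  have t: "t \<in> {v0..B}" "t \<in> {v0..<b}" "B < t + \<delta>" using \<gamma>(1) \<delta>(1) b upper[OF b(1)] by (auto simp: t_def)
  have "Y < \<bar>\<gamma> t\<bar>"
  proof (rule ccontr)
    assume "\<not> Y < \<bar>\<gamma> t\<bar>"
    with \<delta>(2)[OF ode_solution_subset[OF \<gamma>(3)] t(1)] t(2)
    obtain \<psi> where "ode_solution G \<psi> {v0..t+\<delta>}" "\<psi> v0 = x0" using \<gamma>(2) by force
    then have "t + \<delta> \<in> ?S" using t(2) \<delta>(1) unfolding ode_existence_times_def by auto
    then show False using upper t(3) by fastforce
  qed
  with b(1) \<gamma>(2,3) t(2) show ?thesis using that by blast
qed

lemma ode_solution_global_or_blowup:
  fixes G :: "real \<Rightarrow> real \<Rightarrow> real"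
  assumes cont: "continuous_on UNIV (\<lambda>p. G (fst p) (snd p))" and lip: "boxwise_lipschitz UNIV G"
    and nonneg: "\<And>v x. v0 \<le> v \<Longrightarrow> 0 \<le> G v x"
  shows "(\<exists>\<gamma>. \<gamma> v0 = x0 \<and> ode_solution G \<gamma> {v0..}) \<or>
    (\<exists>b>v0. \<exists>\<gamma>. \<gamma> v0 = x0 \<and> ode_solution G \<gamma> {v0..<b} \<and> filterlim \<gamma> at_top (at_left b))"
proof -
  let ?S = "ode_existence_times G v0 x0"
  obtain \<Gamma> where \<Gamma>: "\<And>\<gamma> b v. \<gamma> v0 = x0 \<Longrightarrow> ode_solution G \<gamma> {v0..b} \<Longrightarrow> v0 \<le> v \<Longrightarrow> v < b \<Longrightarrow> \<Gamma> v = \<gamma> v"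
    and \<Gamma>_solves: "\<And>J. J \<subseteq> {v0..} \<Longrightarrow> (\<And>v. v \<in> J \<Longrightarrow> \<exists>b\<in>?S. v < b \<and> J \<inter> {..<b} = {v0..<b}) \<Longrightarrow>
      ode_solution G \<Gamma> J"
    using ode_solution_union[OF lip, of v0 x0] by blast
  obtain b0 where b0: "b0 \<in> ?S" using ode_existence_times_nonempty[OF cont lip] by blast
  have \<Gamma>_v0: "\<Gamma> v0 = x0" using b0 \<Gamma>[of _ b0 v0] unfolding ode_existence_times_def by force
  show ?thesis
  proof (cases "bdd_above ?S")
    case False
    then have "\<exists>b\<in>?S. v < b" for v unfolding bdd_above_def by (meson not_le)
    moreover have "{v0..} \<inter> {..<b} = {v0..<b}" for b by auto
    ultimately have "ode_solution G \<Gamma> {v0..}" by (intro \<Gamma>_solves) auto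
    then show ?thesis using \<Gamma>_v0 by blast
  next
    case True
    define B where "B = Sup ?S"
    have upper: "b \<le> B" if "b \<in> ?S" for b using cSup_upper[OF that True] by (simp add: B_def)
    have below: "\<exists>b\<in>?S. y < b" if "y < B" for y
      using that less_cSup_iff[OF _ True] b0 unfolding B_def by blast
    have v0B: "v0 < B" using upper[OF b0] b0 by (simp add: ode_existence_times_def)
    have sol: "ode_solution G \<Gamma> {v0..<B}"
      by (rule \<Gamma>_solves) (use below upper in \<open>fastforce+\<close>)
    have ico: "is_interval {v0..<B}" unfolding is_interval_1 by auto
    have mono: "\<Gamma> s \<le> \<Gamma> t" if "s \<in> {v0..<B}" "s \<le> t" "t < B" for s t
      using ode_solution_mono[OF sol ico, of s t] nonneg that by auto
    have "\<exists>t\<in>{v0..<B}. Z < \<Gamma> t" for Z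
    proof -
      obtain b \<gamma> t where "b \<in> ?S" "\<gamma> v0 = x0" "ode_solution G \<gamma> {v0..b}" "t \<in> {v0..<b}"
        "max \<bar>Z\<bar> \<bar>x0\<bar> < \<bar>\<gamma> t\<bar>"
        by (rule ode_existence_times_bounded_imp_unbounded[OF cont lip True])
      moreover from this have "t \<in> {v0..<B}" "\<Gamma> t = \<gamma> t" using \<Gamma> upper by fastforce+
      moreover have "x0 \<le> \<Gamma> t" using mono[of v0 t] \<Gamma>_v0 \<open>t \<in> {v0..<B}\<close> by auto
      ultimately show ?thesis by (intro bexI[of _ t]) auto
    qed
    with mono have "filterlim \<Gamma> at_top (at_left B)" by (intro filterlim_at_top_at_left_if_mono_unbounded)
    then show ?thesis using v0B sol \<Gamma>_v0 by blast
  qed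
qed

section \<open>Radially outgoing null geodesics\<close>

lemma outgoing_null_geodesic_iff:
  "outgoing_null_geodesic rc h xp xm \<gamma> I \<longleftrightarrow>
     is_interval I \<and> I \<noteq> {} \<and> \<gamma> ` I \<subseteq> {-rc<..} \<and> ode_solution (ngfield h xp xm) \<gamma> I"
  unfolding outgoing_null_geodesic_def ode_solution_def by auto

lemma spacetime_domain_eq: "spacetime_domain rc = UNIV \<times> {-rc<..}"
  by (auto simp: spacetime_domain_def)

lemma ngfield_eq: "ngfield h xp xm v = (\<lambda>x. 1/2 * h v x * (x - xp v) * (x - xm v))"
  by (simp add: fun_eq_iff ngfield_def)

lemma continuous_on_compose_fst:
  "continuous_on UNIV f \<Longrightarrow> continuous_on S (\<lambda>p. f (fst p))"
  by (rule continuous_on_compose2[of UNIV f S fst]) (auto intro: continuous_intros)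

lemma ngfield_continuous_on:
  assumes h_cont: "continuous_on (spacetime_domain rc) (\<lambda>p. h (fst p) (snd p))"
    and xp: "continuous_on UNIV xp" and xm: "continuous_on UNIV xm"
  shows "continuous_on (spacetime_domain rc) (\<lambda>p. ngfield h xp xm (fst p) (snd p))"
  unfolding ngfield_def
  by (intro continuous_intros h_cont continuous_on_compose_fst[OF xp] continuous_on_compose_fst[OF xm])

lemma ngfield_boxwise_lipschitz:
  assumes h_cont: "continuous_on (spacetime_domain rc) (\<lambda>p. h (fst p) (snd p))"
    and h_deriv: "\<forall>v x. x > - rc \<longrightarrow> (h v has_real_derivative hx v x) (at x)"
    and hx_cont: "continuous_on (spacetime_domain rc) (\<lambda>p. hx (fst p) (snd p))"
    and xp: "continuous_on UNIV xp" and xm: "continuous_on UNIV xm"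
  shows "boxwise_lipschitz {-rc<..} (ngfield h xp xm)"
proof (rule boxwise_lipschitz_if_continuous_deriv[where G' = "\<lambda>v x. 1/2 * (hx v x * (x - xp v) * (x - xm v)
    + h v x * ((x - xm v) + (x - xp v)))"])
  show "(ngfield h xp xm v has_real_derivative
      1/2 * (hx v x * (x - xp v) * (x - xm v) + h v x * ((x - xm v) + (x - xp v)))) (at x)"
    if "x \<in> {-rc<..}" for v x
    using h_deriv that unfolding ngfield_eq by (auto intro!: derivative_eq_intros simp: field_simps)
  show "continuous_on (UNIV \<times> {-rc<..}) (\<lambda>p. 1/2 * (hx (fst p) (snd p) * (snd p - xp (fst p)) * (snd p - xm (fst p))
      + h (fst p) (snd p) * ((snd p - xm (fst p)) + (snd p - xp (fst p)))))"
    using h_cont hx_cont unfolding spacetime_domain_eq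
    by (intro continuous_intros continuous_on_compose_fst[OF xp] continuous_on_compose_fst[OF xm])
qed

lemma eventually_bounded_below_on_Icc:
  fixes h hx :: "real \<Rightarrow> real \<Rightarrow> real"
  assumes h_deriv: "\<forall>v x. x > - rc \<longrightarrow> (h v has_real_derivative hx v x) (at x)"
    and h_lim: "\<forall>K. compact K \<and> K \<subseteq> {- rc<..} \<longrightarrow> uniform_limit K h hinf at_top"
    and hinf_pos: "\<forall>x. x > - rc \<longrightarrow> hinf x > 0" and c: "- rc < c"
  shows "\<exists>m>0. \<forall>\<^sub>F v in at_top. \<forall>x\<in>{c..d}. m \<le> h v x"
proof -
  have "{c..d} \<subseteq> {- rc<..}" using c by auto
  then have lim: "uniform_limit {c..d} h hinf at_top" using h_lim compact_Icc by blast
  have "continuous_on {c..d} (h v)" for v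
  proof (intro continuous_at_imp_continuous_on ballI)
    fix x assume "x \<in> {c..d}"
    then show "isCont (h v) x" using h_deriv c by (intro DERIV_isCont[of _ "hx v x"]) auto
  qed
  then have "continuous_on {c..d} hinf"
    by (intro uniform_limit_theorem[OF _ lim] always_eventually) auto
  with uniform_limit_eventually_ge[OF lim compact_Icc] hinf_pos c show ?thesis by force
qed

lemma ngfield_ge_inside_inner_horizon:
  assumes "0 \<le> h v x" "0 < xp v" "0 \<le> e" "x \<le> - e"
  shows "1/2 * h v x * e\<^sup>2 \<le> ngfield h xp (\<lambda>_. 0) v x"
proof -
  have "e * e \<le> (xp v - x) * (- x)" using assms by (intro mult_mono) auto
  then have "h v x * (e * e) \<le> h v x * ((xp v - x) * (- x))" using assms(1) by (rule mult_left_mono)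
  moreover have "ngfield h xp (\<lambda>_. 0) v x = 1/2 * (h v x * ((xp v - x) * (- x)))"
    by (simp add: ngfield_def field_simps)
  ultimately show ?thesis by (simp add: power2_eq_square)
qed

lemma ngfield_ge_outside_outer_horizon:
  assumes "0 \<le> h v x" "xp v \<le> xp v0" "xm v < xp v" "xp v0 \<le> x0" "x0 \<le> x"
  shows "1/2 * h v x * (x0 - xp v0)\<^sup>2 \<le> ngfield h xp xm v x"
proof -
  have "(x0 - xp v0) * (x0 - xp v0) \<le> (x - xp v) * (x - xm v)"
    using assms by (intro mult_mono) auto
  then have "h v x * (x0 - xp v0)\<^sup>2 \<le> h v x * ((x - xp v) * (x - xm v))"
    using assms(1) by (simp add: mult_left_mono power2_eq_square)
  then show ?thesis by (simp add: ngfield_def algebra_simps)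
qed

lemma inner_horizon_outgoing_null_geodesic:
  "0 < rc \<Longrightarrow> outgoing_null_geodesic rc h xp (\<lambda>_. 0) (\<lambda>v. 0) UNIV"
  by (simp add: outgoing_null_geodesic_def ngfield_def)

lemma outgoing_null_geodesic_meeting_inner_horizon:
  assumes rc: "0 < rc" and lip: "boxwise_lipschitz {-rc<..} (ngfield h xp (\<lambda>_. 0))"
    and geo: "outgoing_null_geodesic rc h xp (\<lambda>_. 0) \<gamma> I" and p: "p \<in> I" "\<gamma> p = 0" and v: "v \<in> I"
  shows "\<gamma> v = 0"
proof -
  have zero: "ode_solution (ngfield h xp (\<lambda>_. 0)) (\<lambda>_. 0) I" "(\<lambda>_. 0::real) ` I \<subseteq> {-rc<..}"
    using rc by (auto simp: ode_solution_def ngfield_def)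
  have X: "is_interval {-rc<..}" unfolding is_interval_1 by auto
  from geo have I: "is_interval I" and sol: "ode_solution (ngfield h xp (\<lambda>_. 0)) \<gamma> I"
    and range: "\<gamma> ` I \<subseteq> {-rc<..}" by (auto simp: outgoing_null_geodesic_iff)
  show ?thesis
    by (rule ode_solution_unique[OF lip X I sol zero(1) range zero(2) p(1) v]) (simp add: p(2))
qed

lemma outgoing_null_geodesic_inside_inner_horizon_stays:
  assumes rc: "0 < rc" and lip: "boxwise_lipschitz {-rc<..} (ngfield h xp (\<lambda>_. 0))"
    and geo: "outgoing_null_geodesic rc h xp (\<lambda>_. 0) \<gamma> {v0..}" and start: "\<gamma> v0 < 0" and v: "v0 \<le> v"
  shows "\<gamma> v < 0"
proof (rule ccontr)
  assume "\<not> \<gamma> v < 0"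
  moreover have "continuous_on {v0..v} \<gamma>"
    using geo by (auto simp: outgoing_null_geodesic_iff intro: continuous_on_subset ode_solution_continuous_on)
  ultimately obtain z where "z \<in> {v0..v}" "\<gamma> z = 0" using IVT'[of \<gamma> v0 0 v] start v by force
  then have "\<gamma> v0 = 0" using outgoing_null_geodesic_meeting_inner_horizon[OF rc lip geo] by auto
  with start show False by simp
qed

lemma outgoing_null_geodesic_inside_inner_horizon_tendsto:
  assumes rc: "0 < rc" and lip: "boxwise_lipschitz {-rc<..} (ngfield h xp (\<lambda>_. 0))"
    and h_pos: "\<forall>v x. x > - rc \<longrightarrow> h v x > 0"
    and h_lower: "\<And>c d. - rc < c \<Longrightarrow> \<exists>m>0. \<forall>\<^sub>F v in at_top. \<forall>x\<in>{c..d}. m \<le> h v x"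
    and xp_pos: "\<And>v. 0 < xp v"
    and geo: "outgoing_null_geodesic rc h xp (\<lambda>_. 0) \<gamma> {v0..}" and start: "\<gamma> v0 < 0"
  shows "(\<gamma> \<longlongrightarrow> 0) at_top"
proof -
  let ?N = "ngfield h xp (\<lambda>_. 0)"
  have sol: "ode_solution ?N \<gamma> {v0..}" and above: "\<And>v. v0 \<le> v \<Longrightarrow> - rc < \<gamma> v"
    using geo by (auto simp: outgoing_null_geodesic_iff)
  have neg: "\<gamma> v < 0" if "v0 \<le> v" for v
    by (rule outgoing_null_geodesic_inside_inner_horizon_stays[OF rc lip geo start that])
  have field_ge: "1/2 * h v x * e\<^sup>2 \<le> ?N v x" if "\<gamma> v0 \<le> x" "0 \<le> e" "x \<le> - e" for v x e
    using that above[of v0] xp_pos[of v]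
    by (intro ngfield_ge_inside_inner_horizon less_imp_le[OF h_pos[rule_format]]) auto
  have "0 \<le> ?N v (\<gamma> v)" if "v0 \<le> v" for v
  proof -
    have "1/2 * h v (\<gamma> v) * 0\<^sup>2 \<le> ?N v (\<gamma> v)"
      using neg[OF that] above[OF that] xp_pos[of v]
      by (intro ngfield_ge_inside_inner_horizon less_imp_le[OF h_pos[rule_format]]) auto
    then show ?thesis by simp
  qed
  then have mono: "\<gamma> s \<le> \<gamma> t" if "v0 \<le> s" "s \<le> t" for s t
    using ode_solution_mono[OF sol is_interval_ci, of s t] that by auto
  have approach: "\<exists>t\<ge>v0. 0 - e < \<gamma> t" if e: "0 < e" for e
  proof (rule ccontr)
    assume "\<not> (\<exists>t\<ge>v0. 0 - e < \<gamma> t)"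
    then have confined: "\<gamma> t \<in> {\<gamma> v0..-e}" if "v0 \<le> t" for t using that mono[of v0 t] by auto
    obtain m where m: "0 < m" "\<forall>\<^sub>F v in at_top. \<forall>x\<in>{\<gamma> v0..-e}. m \<le> h v x"
      using h_lower[OF above[OF order_refl]] by blast
    from m(2) have lower: "\<forall>\<^sub>F v in at_top. \<forall>x\<in>{\<gamma> v0..-e}. 1/2 * m * e\<^sup>2 \<le> ?N v x"
    proof eventually_elim
      case (elim v)
      show ?case
      proof
        fix x assume x: "x \<in> {\<gamma> v0..-e}"
        then have "1/2 * m * e\<^sup>2 \<le> 1/2 * h v x * e\<^sup>2" using elim by (simp add: mult_right_mono)
        also have "\<dots> \<le> ?N v x" using field_ge x e by auto
        finally show "1/2 * m * e\<^sup>2 \<le> ?N v x" .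
      qed
    qed
    have "0 < 1/2 * m * e\<^sup>2" using m(1) e by simp
    from ode_solution_not_confined[OF sol confined lower this] show False .
  qed
  show ?thesis using mono neg approach by (rule tendsto_if_mono_approaching)
qed

lemma not_reaches_scri_from_inner_horizon:
  assumes rc: "0 < rc" and lip: "boxwise_lipschitz {-rc<..} (ngfield h xp (\<lambda>_. 0))"
  shows "\<not> reaches_scri rc h xp (\<lambda>_. 0) v0 0"
proof -
  have False if geo: "outgoing_null_geodesic rc h xp (\<lambda>_. 0) \<gamma> I" and start: "v0 \<in> I" "\<gamma> v0 = 0"
    and escape: "filterlim \<gamma> at_top F" and F: "F \<noteq> bot" and inside: "\<forall>\<^sub>F v in F. v \<in> I" for \<gamma> I F
  proof -
    have "\<forall>\<^sub>F v in F. 1 \<le> \<gamma> v" using escape by (simp add: filterlim_at_top)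
    with inside have "\<forall>\<^sub>F v in F. False"
      by eventually_elim (use outgoing_null_geodesic_meeting_inner_horizon[OF rc lip geo start] in simp)
    with F show False by (simp add: eventually_False)
  qed
  moreover have "\<forall>\<^sub>F v in at_top. v \<in> {v0..}" by (simp add: eventually_ge_at_top)
  moreover have "\<forall>\<^sub>F v in at_left b. v \<in> {v0..<b}" if "v0 < b" for b
    using eventually_at_left_real[OF that] by eventually_elim auto
  ultimately show ?thesis unfolding reaches_scri_def
    by (metis atLeastLessThan_iff atLeast_iff order_refl trivial_limit_at_left_real trivial_limit_at_top_linorder)
qed

lemma ode_solution_outside_outer_horizon_tendsto:
  assumes h_pos: "\<forall>v x. x > - rc \<longrightarrow> h v x > 0"
    and h_lower: "\<And>c d. - rc < c \<Longrightarrow> \<exists>m>0. \<forall>\<^sub>F v in at_top. \<forall>x\<in>{c..d}. m \<le> h v x"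
    and xp_anti: "\<And>v. v0 \<le> v \<Longrightarrow> xp v \<le> xp v0" and ah_order: "\<And>v. xm v < xp v"
    and x0: "xp v0 < x0" "- rc < x0"
    and sol: "ode_solution (ngfield h xp xm) \<gamma> {v0..}" and outside: "\<And>v. v0 \<le> v \<Longrightarrow> x0 \<le> \<gamma> v"
  shows "filterlim \<gamma> at_top at_top"
proof -
  let ?N = "ngfield h xp xm"
  let ?\<epsilon> = "(x0 - xp v0)\<^sup>2"
  have field_ge: "1/2 * h v x * ?\<epsilon> \<le> ?N v x" if "v0 \<le> v" "x0 \<le> x" for v x
    using that xp_anti[OF that(1)] ah_order[of v] x0
    by (intro ngfield_ge_outside_outer_horizon less_imp_le[OF h_pos[rule_format]]) auto
  have "0 \<le> ?N v (\<gamma> v)" if "v0 \<le> v" for v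
  proof -
    have "0 < h v (\<gamma> v)" using h_pos outside[OF that] x0(2) by auto
    then have "0 \<le> 1/2 * h v (\<gamma> v) * ?\<epsilon>" by simp
    with field_ge[OF that outside[OF that]] show ?thesis by linarith
  qed
  then have mono: "\<gamma> s \<le> \<gamma> t" if "v0 \<le> s" "s \<le> t" for s t
    using ode_solution_mono[OF sol is_interval_ci, of s t] that by auto
  have "\<exists>v\<ge>v0. Z < \<gamma> v" for Z
  proof (rule ccontr)
    assume "\<not> (\<exists>v\<ge>v0. Z < \<gamma> v)"
    then have confined: "\<gamma> v \<in> {x0..Z}" if "v0 \<le> v" for v using that outside by (auto simp: not_less)
    obtain m where m: "0 < m" "\<forall>\<^sub>F v in at_top. \<forall>x\<in>{x0..Z}. m \<le> h v x" using h_lower[OF x0(2)] by blast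
    from m(2) eventually_ge_at_top[of v0]
    have lower: "\<forall>\<^sub>F v in at_top. \<forall>x\<in>{x0..Z}. 1/2 * m * ?\<epsilon> \<le> ?N v x"
    proof eventually_elim
      case (elim v)
      show ?case
      proof
        fix x assume x: "x \<in> {x0..Z}"
        then have "1/2 * m * ?\<epsilon> \<le> 1/2 * h v x * ?\<epsilon>" using elim by (simp add: mult_right_mono)
        also have "\<dots> \<le> ?N v x" using field_ge elim x by auto
        finally show "1/2 * m * ?\<epsilon> \<le> ?N v x" .
      qed
    qed
    have "0 < 1/2 * m * ?\<epsilon>" using m(1) x0(1) by simp
    from ode_solution_not_confined[OF sol confined lower this] show False .
  qed
  with mono show ?thesis by (rule filterlim_at_top_if_mono_unbounded)
qed

text \<open>The modified field \<open>G\<close> agrees with the geodesic field for \<open>x \<ge> x\<^sub>0\<close> and is nonnegative,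
  so its solutions starting at \<open>x\<^sub>0\<close> never leave that region.\<close>

lemma outgoing_null_geodesic_outside_outer_horizon_global_or_blowup:
  assumes cont: "continuous_on (spacetime_domain rc) (\<lambda>p. ngfield h xp xm (fst p) (snd p))"
    and lip: "boxwise_lipschitz {-rc<..} (ngfield h xp xm)"
    and h_pos: "\<forall>v x. x > - rc \<longrightarrow> h v x > 0"
    and xp_anti: "\<And>v. v0 \<le> v \<Longrightarrow> xp v \<le> xp v0" and ah_order: "\<And>v. xm v < xp v"
    and x0: "xp v0 < x0" "- rc < x0"
  shows "(\<exists>\<gamma>. \<gamma> v0 = x0 \<and> outgoing_null_geodesic rc h xp xm \<gamma> {v0..} \<and> (\<forall>v\<ge>v0. x0 \<le> \<gamma> v)) \<or>
    (\<exists>b>v0. \<exists>\<gamma>. \<gamma> v0 = x0 \<and> outgoing_null_geodesic rc h xp xm \<gamma> {v0..<b} \<and> filterlim \<gamma> at_top (at_left b))"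
proof -
  let ?N = "ngfield h xp xm"
  define G where "G v x = ?N v (max x x0)" for v x
  have "continuous_on UNIV (\<lambda>p. (fst p, max (snd p) x0))" by (intro continuous_intros)
  moreover have "range (\<lambda>p. (fst p, max (snd p) x0)) \<subseteq> spacetime_domain rc"
    using x0(2) by (auto simp: spacetime_domain_def)
  ultimately have G_cont: "continuous_on UNIV (\<lambda>p. G (fst p) (snd p))"
    unfolding G_def using continuous_on_compose2[OF cont] by fastforce
  have "{x0..} \<subseteq> {-rc<..}" using x0(2) by auto
  from boxwise_lipschitz_max_const[OF lip this] have G_lip: "boxwise_lipschitz UNIV G"
    by (simp add: G_def[abs_def])
  have G_nonneg: "0 \<le> G v x" if "v0 \<le> v" for v x
  proof -
    have "0 < h v (max x x0)" using h_pos x0(2) by auto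
    then have "0 \<le> 1/2 * h v (max x x0) * (x0 - xp v0)\<^sup>2" by simp
    also have "\<dots> \<le> G v x" unfolding G_def
      using that xp_anti[OF that] ah_order[of v] x0(1) \<open>0 < h v (max x x0)\<close>
      by (intro ngfield_ge_outside_outer_horizon) auto
    finally show ?thesis .
  qed
  have geodesic: "outgoing_null_geodesic rc h xp xm \<gamma> J \<and> (\<forall>v\<in>J. x0 \<le> \<gamma> v)"
    if sol: "ode_solution G \<gamma> J" and J: "is_interval J" "v0 \<in> J" "J \<subseteq> {v0..}" and start: "\<gamma> v0 = x0"
    for \<gamma> J
  proof -
    note max_const = ode_solution_of_max_const[OF sol[unfolded G_def] J start G_nonneg[unfolded G_def]]
    have "\<gamma> ` J \<subseteq> {-rc<..}" using max_const(2) x0(2) by fastforce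
    with max_const J(1,2) show ?thesis by (auto simp: outgoing_null_geodesic_iff)
  qed
  have "(\<exists>\<gamma>. \<gamma> v0 = x0 \<and> ode_solution G \<gamma> {v0..}) \<or>
    (\<exists>b>v0. \<exists>\<gamma>. \<gamma> v0 = x0 \<and> ode_solution G \<gamma> {v0..<b} \<and> filterlim \<gamma> at_top (at_left b))"
    by (rule ode_solution_global_or_blowup[OF G_cont G_lip G_nonneg])
  then show ?thesis
  proof (elim disjE exE conjE)
    fix \<gamma> assume "\<gamma> v0 = x0" "ode_solution G \<gamma> {v0..}"
    with geodesic[of \<gamma> "{v0..}"] show ?thesis by auto
  next
    fix b \<gamma> assume b: "v0 < b" and \<gamma>: "\<gamma> v0 = x0" "ode_solution G \<gamma> {v0..<b}"
      and blowup: "filterlim \<gamma> at_top (at_left b)"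
    have "is_interval {v0..<b}" "v0 \<in> {v0..<b}" "{v0..<b} \<subseteq> {v0..}" using b unfolding is_interval_1 by auto
    with geodesic[OF \<gamma>(2) _ _ _ \<gamma>(1)] have "outgoing_null_geodesic rc h xp xm \<gamma> {v0..<b}" by blast
    with b \<gamma>(1) blowup show ?thesis by blast
  qed
qed

lemma reaches_scri_outside_outer_horizon:
  assumes cont: "continuous_on (spacetime_domain rc) (\<lambda>p. ngfield h xp xm (fst p) (snd p))"
    and lip: "boxwise_lipschitz {-rc<..} (ngfield h xp xm)"
    and h_pos: "\<forall>v x. x > - rc \<longrightarrow> h v x > 0"
    and h_lower: "\<And>c d. - rc < c \<Longrightarrow> \<exists>m>0. \<forall>\<^sub>F v in at_top. \<forall>x\<in>{c..d}. m \<le> h v x"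
    and xp_anti: "\<And>v. v0 \<le> v \<Longrightarrow> xp v \<le> xp v0" and ah_order: "\<And>v. xm v < xp v"
    and x0: "xp v0 < x0" "- rc < x0"
  shows "reaches_scri rc h xp xm v0 x0"
proof -
  have "(\<exists>\<gamma>. \<gamma> v0 = x0 \<and> outgoing_null_geodesic rc h xp xm \<gamma> {v0..} \<and> (\<forall>v\<ge>v0. x0 \<le> \<gamma> v)) \<or>
    (\<exists>b>v0. \<exists>\<gamma>. \<gamma> v0 = x0 \<and> outgoing_null_geodesic rc h xp xm \<gamma> {v0..<b} \<and> filterlim \<gamma> at_top (at_left b))"
    by (rule outgoing_null_geodesic_outside_outer_horizon_global_or_blowup[OF cont lip h_pos xp_anti ah_order x0])
  then show ?thesis
  proof (elim disjE exE conjE)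
    fix \<gamma> assume \<gamma>: "\<gamma> v0 = x0" "outgoing_null_geodesic rc h xp xm \<gamma> {v0..}" "\<forall>v\<ge>v0. x0 \<le> \<gamma> v"
    from \<gamma>(2) have "ode_solution (ngfield h xp xm) \<gamma> {v0..}" by (simp add: outgoing_null_geodesic_iff)
    from ode_solution_outside_outer_horizon_tendsto[OF h_pos h_lower xp_anti ah_order x0 this] \<gamma>(3)
    have "filterlim \<gamma> at_top at_top" by auto
    with \<gamma> show ?thesis unfolding reaches_scri_def by blast
  qed (auto simp: reaches_scri_def)
qed

lemma event_horizon_nonempty:
  assumes "\<not> reaches_scri rc h xp xm v1 x1" "- rc < x1" "reaches_scri rc h xp xm v2 x2" "- rc < x2"
  shows "event_horizon rc h xp xm \<noteq> {}"
proof -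
  have "spacetime_domain rc = {p. - rc < (0::real, 1::real) \<bullet> p}"
    by (auto simp: spacetime_domain_def inner_prod_def)
  then have "connected (spacetime_domain rc)" by (simp add: convex_connected convex_halfspace_gt)
  moreover have "(v1, x1) \<in> spacetime_domain rc \<inter> trapped_region rc h xp xm"
    and "(v2, x2) \<in> spacetime_domain rc - trapped_region rc h xp xm"
    using assms by (auto simp: spacetime_domain_def trapped_region_def)
  ultimately show ?thesis unfolding event_horizon_def
    using connected_Int_frontier[of "spacetime_domain rc" "trapped_region rc h xp xm"] by blast
qed

theorem lemma3:
  fixes rc :: real and h hx :: "real \<Rightarrow> real \<Rightarrow> real" and hinf xp xp' xm :: "real \<Rightarrow> real"
  assumes rc_pos: "rc > 0"
    and h_pos: "\<forall>v x. x > - rc \<longrightarrow> h v x > 0"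
    and h_cont: "continuous_on (spacetime_domain rc) (\<lambda>p. h (fst p) (snd p))"
    and h_deriv: "\<forall>v x. x > - rc \<longrightarrow> (h v has_real_derivative hx v x) (at x)"
    and hx_cont: "continuous_on (spacetime_domain rc) (\<lambda>p. hx (fst p) (snd p))"
    and h_lim: "\<forall>K. compact K \<and> K \<subseteq> {- rc<..} \<longrightarrow> uniform_limit K h hinf at_top"
    and hinf_pos: "\<forall>x. x > - rc \<longrightarrow> hinf x > 0"
    and xp_deriv: "\<forall>v. (xp has_real_derivative xp' v) (at v)"
    and xp_decr: "\<forall>v. xp' v < 0"
    and xm_case1: "\<forall>v. (xm has_real_derivative 0) (at v)"
    and ah_order: "\<forall>v. xm v < xp v"
    and xp_lim: "(xp \<longlongrightarrow> 0) at_top"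
    and xm_lim: "(xm \<longlongrightarrow> 0) at_top"
  shows "outgoing_null_geodesic rc h xp xm (\<lambda>v. 0) UNIV
       \<and> (\<forall>\<gamma> I. outgoing_null_geodesic rc h xp xm \<gamma> I \<and> (\<exists>v\<in>I. \<gamma> v = 0)
               \<longrightarrow> (\<forall>v\<in>I. \<gamma> v = 0))
       \<and> (\<forall>\<gamma> v0. outgoing_null_geodesic rc h xp xm \<gamma> {v0..} \<and> \<gamma> v0 < 0
               \<longrightarrow> (\<gamma> \<longlongrightarrow> 0) at_top)
       \<and> event_horizon rc h xp xm \<noteq> {}"
proof -
  have xm0: "xm = (\<lambda>_. 0)" by (rule DERIV_zero_tendsto_imp_const[OF xm_case1 xm_lim])
  have xp_pos: "0 < xp v" for v using ah_order by (simp add: xm0)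
  have xp_cont: "continuous_on UNIV xp"
    using xp_deriv by (intro continuous_at_imp_continuous_on ballI) (auto intro: DERIV_isCont)
  have xp_anti: "xp w \<le> xp v" if "v \<le> w" for v w
    using DERIV_nonpos_imp_nonincreasing[OF that] xp_deriv xp_decr by (meson less_imp_le)
  have lip: "boxwise_lipschitz {-rc<..} (ngfield h xp (\<lambda>_. 0))"
    using ngfield_boxwise_lipschitz[OF h_cont h_deriv hx_cont xp_cont, of "\<lambda>_. 0"] by simp
  note h_lower = eventually_bounded_below_on_Icc[OF h_deriv h_lim hinf_pos]
  have x0: "xp 0 < xp 0 + 1" "- rc < xp 0 + 1" using xp_pos[of 0] rc_pos by auto
  have "reaches_scri rc h xp (\<lambda>_. 0) 0 (xp 0 + 1)"
    using ngfield_continuous_on[OF h_cont xp_cont continuous_on_const] xp_pos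
    by (intro reaches_scri_outside_outer_horizon[OF _ lip h_pos h_lower xp_anti _ x0]) auto
  then have "event_horizon rc h xp (\<lambda>_. 0) \<noteq> {}"
    using rc_pos x0(2) by (intro event_horizon_nonempty[OF not_reaches_scri_from_inner_horizon[OF rc_pos lip]]) auto
  then show ?thesis
    unfolding xm0
    using inner_horizon_outgoing_null_geodesic[OF rc_pos]
      outgoing_null_geodesic_meeting_inner_horizon[OF rc_pos lip]
      outgoing_null_geodesic_inside_inner_horizon_tendsto[OF rc_pos lip h_pos h_lower xp_pos]
    by blast
qed

end
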